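(* Let $d=2q\ge 4$ be fixed and let $Y$ be the number of Hamilton cycles obeying the traffic rules in the random bipartite multigraph $B^*(n,q)$ defined below. Then $$\mathbb{E}(Y)=\Theta\!\left(\left(\frac{(d-1)(d-2)^{d-2}}{d^{d-2}}\right)^{n}\right)$$ as $n\to\infty$. Hence $\mathbb{E}(Y)\to 0$ for $d\le 6$ and $\mathbb{E}(Y)\to\infty$ for $d\ge 8$.
   Context: $B^*(n,q)$: there are $n$ plain and $n$ coloured vertices, each with $d=2q$ half-edges; at each coloured vertex the half-edges are partitioned into $q$ designated pairs. A uniformly random bijection between the $dn$ plain half-edges and the $dn$ coloured half-edges is chosen, each matched pair being an edge. A Hamilton cycle (a cyclic sequence through all $2n$ vertices alternately plain and coloured, specified by the half-edges/edges of the configuration it uses) obeys the traffic rules if at each coloured vertex the two half-edges it uses form a designated pair. $Y$ counts such cycles (equivalently, rainbow Hamilton cycles in the randomly coloured configuration-model $2q$-regular multigraph with $n$ colours, $q$ edges per colour). *)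

theory Defs
  imports "HOL-Analysis.Analysis" "HOL-Library.FuncSet" "HOL-Library.Landau_Symbols"
begin

text \<open>Plain half-edges are pairs (v,i) with v < n, i < d
  (half-edge i at plain vertex v); coloured half-edges are pairs (w,j) with w < n, j < d.
  At each coloured vertex the designated pairs are {2k, 2k+1}, k < q.\<close>

definition half_edges :: "nat \<Rightarrow> nat \<Rightarrow> (nat \<times> nat) set" where
  "half_edges n q = {..<n} \<times> {..<2*q}"

text \<open>All configurations: bijections plain half-edges -> coloured half-edges
  (extensional outside the plain half-edges, so that they are counted once each).\<close>
definition configurations :: "nat \<Rightarrow> nat \<Rightarrow> ((nat \<times> nat) \<Rightarrow> (nat \<times> nat)) set" where
  "configurations n q =
     {\<sigma> \<in> half_edges n q \<rightarrow>\<^sub>E half_edges n q. bij_betw \<sigma> (half_edges n q) (half_edges n q)}"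

definition designated_pair :: "nat \<Rightarrow> nat \<Rightarrow> bool" where
  "designated_pair j j' \<longleftrightarrow> j \<noteq> j' \<and> j div 2 = j' div 2"

text \<open>A Hamilton cycle obeying the traffic rules, given as the set H of plain half-edges
  (each identifying one edge of the configuration) that it uses. The cycle is
  p 0, c 0, p 1, c 1, ..., p (n-1), c (n-1), p 0; the edge p i -- c i uses plain half-edge
  a i (at p i), the edge c i -- p ((i+1) mod n) uses plain half-edge b i (at p ((i+1) mod n)).\<close>
definition traffic_ham_cycle :: "nat \<Rightarrow> nat \<Rightarrow> ((nat \<times> nat) \<Rightarrow> (nat \<times> nat)) \<Rightarrow> (nat \<times> nat) set \<Rightarrow> bool" where
  "traffic_ham_cycle n q \<sigma> H \<longleftrightarrow>
     (\<exists>(p :: nat \<Rightarrow> nat) (c :: nat \<Rightarrow> nat) (a :: nat \<Rightarrow> nat \<times> nat) (b :: nat \<Rightarrow> nat \<times> nat).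
        bij_betw p {..<n} {..<n} \<and> bij_betw c {..<n} {..<n} \<and>
        (\<forall>i<n. a i \<in> half_edges n q \<and> fst (a i) = p i \<and>
               b i \<in> half_edges n q \<and> fst (b i) = p ((i + 1) mod n) \<and>
               fst (\<sigma> (a i)) = c i \<and> fst (\<sigma> (b i)) = c i \<and>
               designated_pair (snd (\<sigma> (a i))) (snd (\<sigma> (b i))) \<and>
               a ((i + 1) mod n) \<noteq> b i) \<and>
        H = a ` {..<n} \<union> b ` {..<n})"

definition Y :: "nat \<Rightarrow> nat \<Rightarrow> ((nat \<times> nat) \<Rightarrow> (nat \<times> nat)) \<Rightarrow> nat" where
  "Y n q \<sigma> = card {H. traffic_ham_cycle n q \<sigma> H}"

definition EY :: "nat \<Rightarrow> nat \<Rightarrow> real" where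
  "EY n q = (\<Sum>\<sigma>\<in>configurations n q. real (Y n q \<sigma>)) / real (card (configurations n q))"

end

theory Submission
  imports Defs "HOL-Number_Theory.Cong"
begin

(* Write a Hamilton cycle obeying the traffic rules as a tour (p, c, a, b): the orders p, c of the
   plain and coloured vertices along the cycle and the plain half-edges a i, b i it uses. The n
   rotations of a tour have the same edge set, and a tour is determined by its edge set and its
   first half-edge, so every such cycle comes from between n and 2n tours. There are
   n!^2 (2q)^n (2q-1)^n tours, and a fixed tour is realised by (2q)^n (2qn-2n)! of the (2qn)!
   configurations: choose the designated pair used at each coloured vertex, then match the
   remaining half-edges freely. Hence E(Y) is within a factor 2 of
   n!^2 (2q)^(2n) (2q-1)^n (kn)! / (n ((k+2)n)!) with k = 2q - 2, and Stirling's formula with an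
   error term between 1/2 and 1 turns this into Theta(r^n), r = (k+1) k^k / (k+2)^k. *)

section \<open>Crude Stirling bounds\<close>

lemma ln_one_plus_ge_rational:
  fixes x :: real
  assumes "0 \<le> x"
  shows "2 * x / (2 + x) \<le> ln (1 + x)"
proof -
  let ?f = "\<lambda>t::real. ln (1 + t) - 2 * t / (2 + t)"
  have "?f 0 \<le> ?f x"
  proof (rule DERIV_nonneg_imp_increasing_open[OF assms])
    fix t :: real assume t: "0 < t" "t < x"
    have "(?f has_real_derivative (1 / (1 + t) - 4 / (2 + t)^2)) (at t)"
      using t by (auto intro!: derivative_eq_intros simp: power2_eq_square)
    moreover have "1 / (1 + t) - 4 / (2 + t)^2 = t^2 / ((1 + t) * (2 + t)^2)"
      using t by (simp add: divide_simps power2_eq_square) (simp add: algebra_simps)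
    moreover have "t^2 / ((1 + t) * (2 + t)^2) \<ge> 0"
      using t by simp
    ultimately show "\<exists>y. DERIV ?f t :> y \<and> 0 \<le> y" by metis
  qed (intro continuous_intros; auto)
  then show ?thesis by simp
qed

lemma ln_one_plus_le_cubic:
  fixes x :: real
  assumes "0 \<le> x"
  shows "ln (1 + x) \<le> x - x^2 / 2 + x^3 / 3"
proof -
  let ?f = "\<lambda>t::real. t - t^2 / 2 + t^3 / 3 - ln (1 + t)"
  have "?f 0 \<le> ?f x"
  proof (rule DERIV_nonneg_imp_increasing_open[OF assms])
    fix t :: real assume t: "0 < t" "t < x"
    have "(?f has_real_derivative (1 - t + t^2 - 1 / (1 + t))) (at t)"
      using t by (auto intro!: derivative_eq_intros simp: power2_eq_square)
    moreover have "1 - t + t^2 - 1 / (1 + t) = t^3 / (1 + t)"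
      using t by (simp add: field_simps power2_eq_square power3_eq_cube)
    moreover have "t^3 / (1 + t) \<ge> 0"
      using t by simp
    ultimately show "\<exists>y. DERIV ?f t :> y \<and> 0 \<le> y" by metis
  qed (intro continuous_intros; auto)
  then show ?thesis by simp
qed

definition stirling_error :: "nat \<Rightarrow> real" where
  "stirling_error m = ln (fact m) + real m - (real m + 1/2) * ln (real m)"

lemma fact_eq_stirling_error:
  assumes "m \<ge> 1"
  shows "(fact m :: real) = exp (stirling_error m) * sqrt (real m) * (real m / exp 1) ^ m"
proof -
  have m: "real m > 0" using assms by simp
  have "exp ((real m + 1/2) * ln (real m)) = real m powr (real m + 1/2)"
    using m by (simp add: powr_def)
  also have "\<dots> = real m powr (real m) * real m powr (1/2)"
    using m by (simp add: powr_add)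
  also have "\<dots> = real m ^ m * sqrt (real m)"
    using m by (simp add: powr_realpow powr_half_sqrt)
  finally have pow: "exp ((real m + 1/2) * ln (real m)) = real m ^ m * sqrt (real m)" .
  have "exp (stirling_error m) = fact m * exp (real m) / exp ((real m + 1/2) * ln (real m))"
    unfolding stirling_error_def by (simp add: exp_diff exp_add)
  moreover have "exp (real m) = exp 1 ^ m"
    by (simp add: exp_of_nat_mult[symmetric])
  ultimately show ?thesis
    using m unfolding pow by (simp add: power_divide field_simps)
qed

lemma stirling_error_diff:
  assumes "m \<ge> 1"
  shows "stirling_error m - stirling_error (Suc m) = (real m + 1/2) * ln (1 + 1 / real m) - 1"
proof -
  have m: "real m > 0" using assms by simp
  have "1 + 1 / real m = (real m + 1) / real m"
    using m by (simp add: field_simps)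
  then have ln_quot: "ln (1 + 1 / real m) = ln (real m + 1) - ln (real m)"
    using m by (simp add: ln_div)
  have Suc_eq: "stirling_error (Suc m)
      = ln (real m + 1) + ln (fact m) + (real m + 1) - (real m + 1 + 1/2) * ln (real m + 1)"
    unfolding stirling_error_def by (simp add: ln_mult del: of_nat_Suc) (simp add: algebra_simps)
  show ?thesis
    unfolding ln_quot Suc_eq by (simp add: stirling_error_def algebra_simps)
qed

lemma stirling_error_Suc_le:
  assumes "m \<ge> 1"
  shows "stirling_error (Suc m) \<le> stirling_error m"
proof -
  have m: "real m > 0" using assms by simp
  have "1 / (real m + 1/2) = 2 * (1 / real m) / (2 + 1 / real m)"
    using m by (simp add: field_simps)
  also have "\<dots> \<le> ln (1 + 1 / real m)"
    by (rule ln_one_plus_ge_rational) simp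
  finally have "1 \<le> (real m + 1/2) * ln (1 + 1 / real m)"
    using m by (simp add: field_simps)
  then show ?thesis using stirling_error_diff[OF assms] by simp
qed

lemma stirling_error_minus_le:
  assumes "m \<ge> 1"
  shows "stirling_error m - 1 / (2 * real m) \<le> stirling_error (Suc m) - 1 / (2 * real (Suc m))"
proof -
  have m: "real m \<ge> 1" using assms by simp
  have "(real m + 1/2) * ln (1 + 1 / real m)
      \<le> (real m + 1/2) * (1 / real m - (1 / real m)^2 / 2 + (1 / real m)^3 / 3)"
    using m by (intro mult_left_mono ln_one_plus_le_cubic) auto
  also have "\<dots> = 1 + 1 / (12 * real m^2) + 1 / (6 * real m^3)"
    using m by (simp add: field_simps power2_eq_square power3_eq_cube)
  also have "\<dots> \<le> 1 + 1 / (4 * real m^2)"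
    using m by (simp add: field_simps power2_eq_square power3_eq_cube)
  also have "\<dots> \<le> 1 + 1 / (2 * real m * (real m + 1))"
    using m by (intro add_left_mono divide_left_mono) (auto simp: power2_eq_square)
  also have "1 / (2 * real m * (real m + 1)) = 1 / (2 * real m) - 1 / (2 * (real m + 1))"
    using m by (simp add: field_simps)
  finally show ?thesis using stirling_error_diff[OF assms] by (simp add: algebra_simps)
qed

lemma stirling_error_bounds:
  assumes "m \<ge> 1"
  shows "1/2 \<le> stirling_error m" and "stirling_error m \<le> 1"
proof -
  have one: "stirling_error 1 = 1" by (simp add: stirling_error_def)
  have "stirling_error m \<le> stirling_error 1"
    using assms
  proof (induction m rule: dec_induct)
    case (step k)
    then show ?case using stirling_error_Suc_le[of k] by simp
  qed simp
  moreover have "stirling_error 1 - 1/2 \<le> stirling_error m - 1 / (2 * real m)"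
    using assms
  proof (induction m rule: dec_induct)
    case (step k)
    then show ?case using stirling_error_minus_le[of k] by simp
  qed simp
  moreover have "1 / (2 * real m) \<ge> 0" by simp
  ultimately show "1/2 \<le> stirling_error m" "stirling_error m \<le> 1" using one by linarith+
qed

lemma fact_mult_eq_stirling_error:
  assumes "j \<ge> 1" "n \<ge> 1"
  shows "(fact (j * n) :: real)
    = exp (stirling_error (j * n)) * (sqrt (real j) * sqrt (real n)) * ((real j * real n / exp 1) ^ j) ^ n"
  using fact_eq_stirling_error[of "j * n"] assms
  by (simp add: real_sqrt_mult power_mult)

lemma fact_sq_mult_fact_div_fact:
  assumes k: "k \<ge> 1" and n: "n \<ge> 1"
  shows "fact n ^ 2 * fact (k * n) / fact ((k + 2) * n)
    = exp (2 * stirling_error n + stirling_error (k * n) - stirling_error ((k + 2) * n))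
      * real n * sqrt (real k / (real k + 2)) * (real k ^ k / (real k + 2) ^ (k + 2)) ^ n"
proof -
  define N K where "N = real n" and "K = real k"
  have pos: "N > 0" "K > 0" "exp 1 > (0::real)" using k n by (auto simp: N_def K_def)
  have f0: "fact n = exp (stirling_error n) * sqrt N * (N / exp 1) ^ n"
    unfolding N_def using fact_eq_stirling_error[OF n] .
  have f1: "fact (k * n) = exp (stirling_error (k * n)) * (sqrt K * sqrt N) * ((K * N / exp 1) ^ k) ^ n"
    unfolding N_def K_def using fact_mult_eq_stirling_error[OF k n] .
  have f2: "fact ((k + 2) * n) = exp (stirling_error ((k + 2) * n)) * (sqrt (K + 2) * sqrt N)
      * (((K + 2) * N / exp 1) ^ (k + 2)) ^ n"
  proof -
    have eq: "real (k + 2) = K + 2" and k2: "k + 2 \<ge> 1" by (simp_all add: K_def)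
    show ?thesis
      unfolding N_def using fact_mult_eq_stirling_error[OF k2 n] unfolding eq .
  qed
  have regroup: "(a * b * c) ^ 2 * (d * e * f) / (g * h * i) = (a^2 * d / g) * (b^2 * e / h) * (c^2 * f / i)"
    if "g \<noteq> 0" "h \<noteq> 0" "i \<noteq> 0" for a b c d e f g h i :: real
    using that by (simp add: field_simps power2_eq_square)
  have exp_part: "exp (stirling_error n) ^ 2 * exp (stirling_error (k * n)) / exp (stirling_error ((k + 2) * n))
      = exp (2 * stirling_error n + stirling_error (k * n) - stirling_error ((k + 2) * n))"
    by (simp add: exp_add exp_diff exp_double)
  have sqrt_part: "sqrt N ^ 2 * (sqrt K * sqrt N) / (sqrt (K + 2) * sqrt N) = N * sqrt (K / (K + 2))"
    using pos by (simp add: real_sqrt_divide)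
  have base: "(N / exp 1) ^ 2 * (K * N / exp 1) ^ k / ((K + 2) * N / exp 1) ^ (k + 2) = K ^ k / (K + 2) ^ (k + 2)"
  proof -
    have cancel: "x2 / e2 * (y * x / e) / (a * x / e * (b * x2 / e2)) = y / (a * b)"
      if "x \<noteq> 0" "x2 \<noteq> 0" "e \<noteq> 0" "e2 \<noteq> 0" "a \<noteq> 0" "b \<noteq> 0" for x x2 e e2 y a b :: real
      using that by (simp add: field_simps)
    show ?thesis
      unfolding power_divide power_mult_distrib power_add using pos by (intro cancel) auto
  qed
  have pow_part: "((N / exp 1) ^ n) ^ 2 * ((K * N / exp 1) ^ k) ^ n / (((K + 2) * N / exp 1) ^ (k + 2)) ^ n
      = (K ^ k / (K + 2) ^ (k + 2)) ^ n"
    unfolding base[symmetric] by (simp add: power_mult_distrib power_divide power_mult[symmetric] mult.commute)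
  have "fact n ^ 2 * fact (k * n) / fact ((k + 2) * n)
      = (exp (stirling_error n) ^ 2 * exp (stirling_error (k * n)) / exp (stirling_error ((k + 2) * n)))
        * (sqrt N ^ 2 * (sqrt K * sqrt N) / (sqrt (K + 2) * sqrt N))
        * (((N / exp 1) ^ n) ^ 2 * ((K * N / exp 1) ^ k) ^ n / (((K + 2) * N / exp 1) ^ (k + 2)) ^ n)"
    unfolding f0 f1 f2 by (rule regroup) (use pos in auto)
  also have "\<dots> = exp (2 * stirling_error n + stirling_error (k * n) - stirling_error ((k + 2) * n))
      * (N * sqrt (K / (K + 2))) * (K ^ k / (K + 2) ^ (k + 2)) ^ n"
    unfolding exp_part sqrt_part pow_part ..
  finally show ?thesis by (simp add: N_def K_def mult.assoc)
qed

section \<open>Bijections with prescribed values\<close>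

definition bijections :: "'a set \<Rightarrow> 'b set \<Rightarrow> ('a \<Rightarrow> 'b) set" where
  "bijections A B = {f \<in> A \<rightarrow>\<^sub>E B. bij_betw f A B}"

lemma finite_bijections: "finite A \<Longrightarrow> finite B \<Longrightarrow> finite (bijections A B)"
  unfolding bijections_def by (rule finite_subset[OF _ finite_PiE[of A "\<lambda>_. B"]]) auto

lemma restrict_in_bijections: "bij_betw f A B \<Longrightarrow> restrict f A \<in> bijections A B"
  unfolding bijections_def by (auto simp: bij_betw_apply)

lemma bijectionsD:
  assumes "f \<in> bijections A B"
  shows "bij_betw f A B" "inj_on f A" "\<And>x. x \<in> A \<Longrightarrow> f x \<in> B" "f \<in> extensional A"
  using assms unfolding bijections_def bij_betw_def PiE_def by auto

lemma card_bijections: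
  assumes "finite A" "finite B" "card A = card B"
  shows "card (bijections A B) = fact (card A)"
proof -
  have "f ` A = B" if "f \<in> A \<rightarrow>\<^sub>E B" "inj_on f A" for f
    using that assms by (intro card_subset_eq) (auto simp: card_image)
  then have "bijections A B = {f \<in> A \<rightarrow>\<^sub>E B. inj_on f A}"
    unfolding bijections_def bij_betw_def by auto
  then have "card (bijections A B) = (\<Prod>i = 0..<card A. card A - i)"
    using card_inj_on_subset_funcset[of A B A] assms by simp
  then show ?thesis by (simp add: fact_prod_rev)
qed

lemma bij_betw_restrict_prescribed_bijections:
  assumes "X \<subseteq> S" "inj_on f X" "f ` X \<subseteq> S"
  shows "bij_betw (\<lambda>\<sigma>. restrict \<sigma> (S - X))
           {\<sigma> \<in> bijections S S. \<forall>x\<in>X. \<sigma> x = f x} (bijections (S - X) (S - f ` X))"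
proof (rule bij_betw_byWitness[where f' = "\<lambda>\<tau>. restrict (\<lambda>s. if s \<in> X then f s else \<tau> s) S"])
  show "\<forall>\<sigma>\<in>{\<sigma> \<in> bijections S S. \<forall>x\<in>X. \<sigma> x = f x}.
          restrict (\<lambda>s. if s \<in> X then f s else restrict \<sigma> (S - X) s) S = \<sigma>"
    unfolding bijections_def by (auto simp: PiE_def extensional_def fun_eq_iff)
  show "\<forall>\<tau>\<in>bijections (S - X) (S - f ` X).
          restrict (restrict (\<lambda>s. if s \<in> X then f s else \<tau> s) S) (S - X) = \<tau>"
    unfolding bijections_def by (auto simp: PiE_def extensional_def fun_eq_iff)
  have f_bij: "bij_betw f X (f ` X)"
    using assms(2) by (simp add: bij_betw_imageI)
  show "(\<lambda>\<sigma>. restrict \<sigma> (S - X)) ` {\<sigma> \<in> bijections S S. \<forall>x\<in>X. \<sigma> x = f x}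
      \<subseteq> bijections (S - X) (S - f ` X)"
  proof clarify
    fix \<sigma> assume \<sigma>: "\<sigma> \<in> bijections S S" "\<forall>x\<in>X. \<sigma> x = f x"
    then have "bij_betw \<sigma> X (f ` X)"
      using f_bij bij_betw_cong[of X \<sigma> f] by simp
    then have "bij_betw \<sigma> (S - X) (S - f ` X)"
      using \<sigma> assms by (intro bij_betw_DiffI) (auto simp: bijections_def)
    then show "restrict \<sigma> (S - X) \<in> bijections (S - X) (S - f ` X)"
      unfolding bijections_def by (auto simp: bij_betw_def)
  qed
  show "(\<lambda>\<tau>. restrict (\<lambda>s. if s \<in> X then f s else \<tau> s) S) ` bijections (S - X) (S - f ` X)
      \<subseteq> {\<sigma> \<in> bijections S S. \<forall>x\<in>X. \<sigma> x = f x}"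
  proof clarify
    fix \<tau> assume "\<tau> \<in> bijections (S - X) (S - f ` X)"
    then have "bij_betw (\<lambda>s. if s \<in> X then f s else \<tau> s) (X \<union> (S - X)) (f ` X \<union> (S - f ` X))"
      using f_bij by (intro bij_betw_disjoint_Un) (auto simp: bijections_def)
    moreover have "X \<union> (S - X) = S" "f ` X \<union> (S - f ` X) = S"
      using assms by auto
    ultimately have bij: "bij_betw (\<lambda>s. if s \<in> X then f s else \<tau> s) S S" by simp
    have "(if s \<in> X then f s else \<tau> s) \<in> S" if "s \<in> S" for s
      using bij_betw_apply[OF bij that] .
    with bij show "restrict (\<lambda>s. if s \<in> X then f s else \<tau> s) S \<in> bijections S S
        \<and> (\<forall>x\<in>X. restrict (\<lambda>s. if s \<in> X then f s else \<tau> s) S x = f x)"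
      using assms(1) unfolding bijections_def by auto
  qed
qed

lemma card_prescribed_bijections:
  assumes "finite S" "X \<subseteq> S" "inj_on f X" "f ` X \<subseteq> S"
  shows "card {\<sigma> \<in> bijections S S. \<forall>x\<in>X. \<sigma> x = f x} = fact (card S - card X)"
proof -
  have "finite X" using assms finite_subset by auto
  have "card {\<sigma> \<in> bijections S S. \<forall>x\<in>X. \<sigma> x = f x} = card (bijections (S - X) (S - f ` X))"
    using bij_betw_same_card[OF bij_betw_restrict_prescribed_bijections[OF assms(2-)]] .
  also have "\<dots> = fact (card S - card X)"
    using assms \<open>finite X\<close> by (subst card_bijections) (auto simp: card_Diff_subset card_image)
  finally show ?thesis .
qed

lemma card_bijections_mapping:
  assumes "finite S" "inj_on x K" "x ` K \<subseteq> S" "inj_on y K" "y ` K \<subseteq> S"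
  shows "card {\<sigma> \<in> bijections S S. \<forall>k\<in>K. \<sigma> (x k) = y k} = fact (card S - card K)"
proof -
  define f where "f = y \<circ> the_inv_into K x"
  have fx: "f (x k) = y k" if "k \<in> K" for k
    unfolding f_def using the_inv_into_f_f[OF assms(2) that] by simp
  have "inj_on f (x ` K)"
    using assms(4) by (auto simp: inj_on_def fx)
  moreover have "f ` x ` K \<subseteq> S"
    using assms(5) by (auto simp: fx)
  moreover have "{\<sigma> \<in> bijections S S. \<forall>k\<in>K. \<sigma> (x k) = y k} = {\<sigma> \<in> bijections S S. \<forall>s\<in>x ` K. \<sigma> s = f s}"
    using fx by auto
  ultimately show ?thesis
    using assms card_prescribed_bijections[of S "x ` K" f] by (simp add: card_image)
qed

section \<open>Tours\<close>

lemma inj_on_add_mod: "inj_on (\<lambda>i. (i + k) mod n) {..<n :: nat}"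
proof (rule inj_onI)
  fix i j assume "i \<in> {..<n}" "j \<in> {..<n}" "(i + k) mod n = (j + k) mod n"
  then have "[i = j] (mod n)" and "i < n" "j < n"
    by (simp_all add: cong_def[symmetric] cong_add_rcancel_nat)
  then show "i = j"
    by (rule cong_less_modulus_unique_nat)
qed

lemma Suc_mod_inj: "i < n \<Longrightarrow> j < n \<Longrightarrow> Suc i mod n = Suc j mod n \<Longrightarrow> i = j"
  using inj_on_add_mod[of 1 n] by (auto dest: inj_onD)

lemma bij_betw_add_mod:
  fixes n k :: nat
  assumes "0 < n"
  shows "bij_betw (\<lambda>i. (i + k) mod n) {..<n} {..<n}"
proof -
  have "(\<lambda>i. (i + k) mod n) ` {..<n} = {..<n}"
    using assms inj_on_add_mod by (intro endo_inj_surj) auto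
  then show ?thesis
    unfolding bij_betw_def using inj_on_add_mod by blast
qed

lemma Suc_mod_add_mod: "(Suc i mod n + k) mod n = Suc ((i + k) mod n) mod n"
  by (simp add: mod_Suc_eq mod_add_left_eq)

type_synonym tour = "(nat \<Rightarrow> nat) \<times> (nat \<Rightarrow> nat) \<times> (nat \<Rightarrow> nat \<times> nat) \<times> (nat \<Rightarrow> nat \<times> nat)"

definition tours :: "nat \<Rightarrow> nat \<Rightarrow> tour set" where
  "tours n q = {(p, c, a, b). p \<in> bijections {..<n} {..<n} \<and> c \<in> bijections {..<n} {..<n}
     \<and> a \<in> (\<Pi>\<^sub>E i\<in>{..<n}. {p i} \<times> {..<2*q})
     \<and> b \<in> (\<Pi>\<^sub>E i\<in>{..<n}. {p (Suc i mod n)} \<times> {..<2*q} - {a (Suc i mod n)})}"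

definition obeys_traffic :: "nat \<Rightarrow> (nat \<times> nat \<Rightarrow> nat \<times> nat) \<Rightarrow> tour \<Rightarrow> bool" where
  "obeys_traffic n \<sigma> = (\<lambda>(p, c, a, b). \<forall>i<n. fst (\<sigma> (a i)) = c i \<and> fst (\<sigma> (b i)) = c i
     \<and> designated_pair (snd (\<sigma> (a i))) (snd (\<sigma> (b i))))"

definition traffic_tours :: "nat \<Rightarrow> nat \<Rightarrow> (nat \<times> nat \<Rightarrow> nat \<times> nat) \<Rightarrow> tour set" where
  "traffic_tours n q \<sigma> = {t \<in> tours n q. obeys_traffic n \<sigma> t}"

definition tour_edges :: "nat \<Rightarrow> tour \<Rightarrow> (nat \<times> nat) set" where
  "tour_edges n = (\<lambda>(p, c, a, b). a ` {..<n} \<union> b ` {..<n})"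

lemma traffic_ham_cycle_imp_tour_edges:
  assumes "traffic_ham_cycle n q \<sigma> H"
  shows "H \<in> tour_edges n ` traffic_tours n q \<sigma>"
proof -
  obtain p c a b where p: "bij_betw p {..<n} {..<n}" and c: "bij_betw c {..<n} {..<n}"
    and cond: "\<forall>i<n. a i \<in> half_edges n q \<and> fst (a i) = p i \<and>
               b i \<in> half_edges n q \<and> fst (b i) = p ((i + 1) mod n) \<and>
               fst (\<sigma> (a i)) = c i \<and> fst (\<sigma> (b i)) = c i \<and>
               designated_pair (snd (\<sigma> (a i))) (snd (\<sigma> (b i))) \<and>
               a ((i + 1) mod n) \<noteq> b i"
    and H: "H = a ` {..<n} \<union> b ` {..<n}"
    using assms unfolding traffic_ham_cycle_def by blast
  let ?t = "(restrict p {..<n}, restrict c {..<n}, restrict a {..<n}, restrict b {..<n})"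
  have "restrict a {..<n} \<in> (\<Pi>\<^sub>E i\<in>{..<n}. {restrict p {..<n} i} \<times> {..<2*q})"
    using cond unfolding half_edges_def by (simp add: mem_Times_iff)
  moreover have "restrict b {..<n}
      \<in> (\<Pi>\<^sub>E i\<in>{..<n}. {restrict p {..<n} (Suc i mod n)} \<times> {..<2*q} - {restrict a {..<n} (Suc i mod n)})"
  proof (rule PiE_I)
    fix i assume "i \<in> {..<n}"
    moreover from this have "Suc i mod n < n" by simp
    ultimately show "restrict b {..<n} i
        \<in> {restrict p {..<n} (Suc i mod n)} \<times> {..<2*q} - {restrict a {..<n} (Suc i mod n)}"
      using cond[rule_format, of i] unfolding half_edges_def by (auto simp: mem_Times_iff)
  qed simp
  ultimately have "?t \<in> tours n q"
    using restrict_in_bijections[OF p] restrict_in_bijections[OF c] unfolding tours_def by simp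
  moreover have "obeys_traffic n \<sigma> ?t"
    using cond unfolding obeys_traffic_def by simp
  moreover have "tour_edges n ?t = H"
    unfolding tour_edges_def H by simp
  ultimately show ?thesis
    unfolding traffic_tours_def by blast
qed

lemma traffic_ham_cycle_tour_edges:
  assumes "(p, c, a, b) \<in> traffic_tours n q \<sigma>"
  shows "traffic_ham_cycle n q \<sigma> (tour_edges n (p, c, a, b))"
proof -
  have p: "bij_betw p {..<n} {..<n}" and c: "bij_betw c {..<n} {..<n}"
    and a: "a \<in> (\<Pi>\<^sub>E i\<in>{..<n}. {p i} \<times> {..<2*q})"
    and b: "b \<in> (\<Pi>\<^sub>E i\<in>{..<n}. {p (Suc i mod n)} \<times> {..<2*q} - {a (Suc i mod n)})"
    and obeys: "obeys_traffic n \<sigma> (p, c, a, b)"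
    using assms unfolding traffic_tours_def tours_def by (auto dest: bijectionsD(1))
  have "a i \<in> half_edges n q \<and> fst (a i) = p i \<and>
        b i \<in> half_edges n q \<and> fst (b i) = p ((i + 1) mod n) \<and>
        fst (\<sigma> (a i)) = c i \<and> fst (\<sigma> (b i)) = c i \<and>
        designated_pair (snd (\<sigma> (a i))) (snd (\<sigma> (b i))) \<and>
        a ((i + 1) mod n) \<noteq> b i" if i: "i < n" for i
  proof -
    have "a i \<in> {p i} \<times> {..<2*q}" "b i \<in> {p (Suc i mod n)} \<times> {..<2*q}" "b i \<noteq> a (Suc i mod n)"
      using a b i by (auto simp: PiE_iff)
    moreover have "p i < n" "p (Suc i mod n) < n"
      using bij_betw_apply[OF p] i by simp_all
    ultimately show ?thesis
      using obeys i unfolding obeys_traffic_def half_edges_def by (auto simp: mem_Times_iff)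
  qed
  then show ?thesis
    using p c unfolding traffic_ham_cycle_def tour_edges_def by blast
qed

lemma traffic_ham_cycles_eq_tour_edges:
  "{H. traffic_ham_cycle n q \<sigma> H} = tour_edges n ` traffic_tours n q \<sigma>"
proof (intro set_eqI iffI)
  fix H assume "H \<in> {H. traffic_ham_cycle n q \<sigma> H}"
  then show "H \<in> tour_edges n ` traffic_tours n q \<sigma>"
    using traffic_ham_cycle_imp_tour_edges by simp
next
  fix H assume "H \<in> tour_edges n ` traffic_tours n q \<sigma>"
  then obtain t where t: "t \<in> traffic_tours n q \<sigma>" and H: "H = tour_edges n t"
    by blast
  obtain p c a b where "t = (p, c, a, b)" by (cases t)
  then show "H \<in> {H. traffic_ham_cycle n q \<sigma> H}"
    using traffic_ham_cycle_tour_edges t H by simp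
qed

lemma toursD:
  assumes "(p, c, a, b) \<in> tours n q"
  shows "inj_on p {..<n}" "inj_on c {..<n}" "\<And>i. i < n \<Longrightarrow> p i < n" "\<And>i. i < n \<Longrightarrow> c i < n"
    and "\<And>i. i < n \<Longrightarrow> a i \<in> {p i} \<times> {..<2*q}"
    and "\<And>i. i < n \<Longrightarrow> b i \<in> {p (Suc i mod n)} \<times> {..<2*q}"
    and "\<And>i. i < n \<Longrightarrow> b i \<noteq> a (Suc i mod n)"
  using assms unfolding tours_def by (auto simp: PiE_iff dest: bijectionsD)

lemma traffic_toursD:
  assumes "(p, c, a, b) \<in> traffic_tours n q \<sigma>"
  shows "inj_on p {..<n}" "inj_on c {..<n}"
    and "\<And>i. i < n \<Longrightarrow> fst (a i) = p i" "\<And>i. i < n \<Longrightarrow> fst (b i) = p (Suc i mod n)"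
    and "\<And>i. i < n \<Longrightarrow> b i \<noteq> a (Suc i mod n)" "\<And>i. i < n \<Longrightarrow> b i \<noteq> a i"
    and "\<And>i. i < n \<Longrightarrow> fst (\<sigma> (a i)) = c i" "\<And>i. i < n \<Longrightarrow> fst (\<sigma> (b i)) = c i"
    and "p \<in> extensional {..<n}" "c \<in> extensional {..<n}"
    and "a \<in> extensional {..<n}" "b \<in> extensional {..<n}"
proof -
  have "designated_pair (snd (\<sigma> (a i))) (snd (\<sigma> (b i)))" if "i < n" for i
    using assms that unfolding traffic_tours_def obeys_traffic_def by auto
  then show "\<And>i. i < n \<Longrightarrow> b i \<noteq> a i"
    unfolding designated_pair_def by metis
qed (use assms in \<open>auto simp: traffic_tours_def tours_def obeys_traffic_def PiE_iff
                               mem_Times_iff dest: bijectionsD\<close>)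

lemma tour_half_edges_distinct:
  assumes t: "(p, c, a, b) \<in> tours n q" and ij: "i < n" "j < n"
  shows "a i = a j \<Longrightarrow> i = j" and "b i = b j \<Longrightarrow> i = j" and "a i \<noteq> b j"
proof -
  note tD = toursD[OF t]
  have ij': "Suc i mod n < n" "Suc j mod n < n" using ij by simp_all
  have fst_a: "fst (a k) = p k" and fst_b: "fst (b k) = p (Suc k mod n)" if "k < n" for k
    using tD(5,6)[OF that] by auto
  show "i = j" if "a i = a j"
    using that fst_a[OF ij(1)] fst_a[OF ij(2)] tD(1) ij by (auto dest: inj_onD)
  show "i = j" if "b i = b j"
    using that fst_b[OF ij(1)] fst_b[OF ij(2)] tD(1) ij ij' Suc_mod_inj by (metis inj_onD lessThan_iff)
  show "a i \<noteq> b j"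
  proof
    assume "a i = b j"
    then have "i = Suc j mod n"
      using fst_a[OF ij(1)] fst_b[OF ij(2)] tD(1) ij ij' by (auto dest: inj_onD)
    then show False
      using \<open>a i = b j\<close> tD(7)[OF ij(2)] by simp
  qed
qed

lemma finite_tours: "finite (tours n q)"
proof (rule finite_subset)
  let ?B = "bijections {..<n} {..<n}" and ?E = "{..<n} \<rightarrow>\<^sub>E {..<n} \<times> {..<2*q}"
  have "f i < n" if "f \<in> bijections {..<n} {..<n}" "i < n" for f i
    using bijectionsD(3)[OF that(1)] that(2) by simp
  then show "tours n q \<subseteq> ?B \<times> ?B \<times> ?E \<times> ?E"
    unfolding tours_def by (auto simp: PiE_iff extensional_def mem_Times_iff)
  show "finite (?B \<times> ?B \<times> ?E \<times> ?E)"
    by (intro finite_cartesian_product finite_bijections finite_PiE) auto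
qed

lemma finite_traffic_tours: "finite (traffic_tours n q \<sigma>)"
  using finite_tours unfolding traffic_tours_def by simp

section \<open>Tours with the same edge set\<close>

lemma tour_edges_iff:
  "x \<in> tour_edges n (p, c, a, b) \<longleftrightarrow> (\<exists>i<n. x = a i \<or> x = b i)"
  unfolding tour_edges_def by auto

lemma tour_edge_at_colour:
  assumes t: "(p, c, a, b) \<in> traffic_tours n q \<sigma>" and "j < n"
    and x: "x \<in> tour_edges n (p, c, a, b)" "fst (\<sigma> x) = c j" "x \<noteq> a j"
  shows "x = b j"
proof -
  obtain i where i: "i < n" "x = a i \<or> x = b i"
    using x(1) tour_edges_iff by blast
  then have "c i = c j"
    using x(2) traffic_toursD(7,8)[OF t] by auto
  then have "i = j"
    using traffic_toursD(2)[OF t] i \<open>j < n\<close> by (auto dest: inj_onD)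
  then show ?thesis using i x(3) by auto
qed

lemma tour_edge_at_plain:
  assumes t: "(p, c, a, b) \<in> traffic_tours n q \<sigma>" and "j < n"
    and x: "x \<in> tour_edges n (p, c, a, b)" "fst x = p (Suc j mod n)" "x \<noteq> b j"
  shows "x = a (Suc j mod n)"
proof -
  have j': "Suc j mod n < n" using \<open>j < n\<close> by simp
  obtain i where i: "i < n" "x = a i \<or> x = b i"
    using x(1) tour_edges_iff by blast
  then show ?thesis
  proof (elim disjE)
    assume "x = a i"
    then have "i = Suc j mod n"
      using x(2) traffic_toursD(1,3)[OF t] i j' by (auto dest: inj_onD)
    then show ?thesis using \<open>x = a i\<close> by simp
  next
    assume "x = b i"
    then have "Suc i mod n = Suc j mod n"
      using x(2) traffic_toursD(1,4)[OF t] i j' by (auto dest: inj_onD)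
    then show ?thesis using Suc_mod_inj \<open>x = b i\<close> x(3) i \<open>j < n\<close> by blast
  qed
qed

(* Walking along the cycle from a 0, each half-edge of the tour is forced by the previous one. *)
lemma traffic_tour_eqI:
  assumes t: "(p, c, a, b) \<in> traffic_tours n q \<sigma>" and t': "(p', c', a', b') \<in> traffic_tours n q \<sigma>"
    and H: "tour_edges n (p, c, a, b) = tour_edges n (p', c', a', b')" and "a 0 = a' 0"
  shows "(p, c, a, b) = (p', c', a', b')"
proof -
  have b_eq: "b i = b' i" if "i < n" "a i = a' i" for i
  proof (rule sym, rule tour_edge_at_colour[OF t \<open>i < n\<close>])
    show "b' i \<in> tour_edges n (p, c, a, b)"
      unfolding H tour_edges_iff using \<open>i < n\<close> by blast
    show "fst (\<sigma> (b' i)) = c i"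
      using that traffic_toursD(7)[OF t] traffic_toursD(7,8)[OF t'] by metis
    show "b' i \<noteq> a i"
      using that traffic_toursD(6)[OF t'] by metis
  qed
  have a_eq: "a (Suc i) = a' (Suc i)" if "Suc i < n" "b i = b' i" for i
  proof -
    have "a' (Suc i mod n) = a (Suc i mod n)"
    proof (rule tour_edge_at_plain[OF t])
      show "a' (Suc i mod n) \<in> tour_edges n (p, c, a, b)"
        unfolding H tour_edges_iff using \<open>Suc i < n\<close> by (metis mod_less)
      show "fst (a' (Suc i mod n)) = p (Suc i mod n)"
        using that traffic_toursD(3,4)[OF t] traffic_toursD(3,4)[OF t'] by (metis Suc_lessD mod_less)
      show "a' (Suc i mod n) \<noteq> b i"
        using that traffic_toursD(5)[OF t'] by (metis Suc_lessD)
    qed (use that in simp)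
    then show ?thesis using that by simp
  qed
  have "i < n \<longrightarrow> a i = a' i" for i
    by (induction i) (use \<open>a 0 = a' 0\<close> a_eq b_eq in auto)
  then have ab: "a i = a' i" "b i = b' i" if "i < n" for i
    using that b_eq by auto
  then have "p i = p' i" "c i = c' i" if "i < n" for i
    using that traffic_toursD(3,7)[OF t] traffic_toursD(3,7)[OF t'] by metis+
  with ab show ?thesis
    using traffic_toursD(9-12)[OF t] traffic_toursD(9-12)[OF t']
    by (metis extensionalityI lessThan_iff)
qed

definition cyc_shift :: "nat \<Rightarrow> nat \<Rightarrow> (nat \<Rightarrow> 'a) \<Rightarrow> nat \<Rightarrow> 'a" where
  "cyc_shift n k f = (\<lambda>i\<in>{..<n}. f ((i + k) mod n))"

definition rotate_tour :: "nat \<Rightarrow> nat \<Rightarrow> tour \<Rightarrow> tour" where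
  "rotate_tour n k = (\<lambda>(p, c, a, b). (cyc_shift n k p, cyc_shift n k c, cyc_shift n k a, cyc_shift n k b))"

lemma cyc_shift_extensional: "cyc_shift n k f \<in> extensional {..<n}"
  unfolding cyc_shift_def by simp

lemma cyc_shift_apply: "i < n \<Longrightarrow> cyc_shift n k f i = f ((i + k) mod n)"
  unfolding cyc_shift_def by simp

lemma image_cyc_shift: "0 < n \<Longrightarrow> cyc_shift n k f ` {..<n} = f ` {..<n}"
  using bij_betw_add_mod[of n k] unfolding cyc_shift_def bij_betw_def
  by (metis (no_types, lifting) image_cong image_image restrict_apply')

lemma cyc_shift_in_bijections:
  assumes "0 < n" "f \<in> bijections {..<n} {..<n}"
  shows "cyc_shift n k f \<in> bijections {..<n} {..<n}"
proof -
  have "bij_betw (f \<circ> (\<lambda>i. (i + k) mod n)) {..<n} {..<n}"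
    using bij_betw_add_mod[OF assms(1)] bijectionsD(1)[OF assms(2)] by (rule bij_betw_trans)
  from restrict_in_bijections[OF this] show ?thesis
    unfolding cyc_shift_def by (simp add: comp_def)
qed

lemma rotate_tour_in_traffic_tours:
  assumes n: "0 < n" and t: "(p, c, a, b) \<in> traffic_tours n q \<sigma>"
  shows "rotate_tour n k (p, c, a, b) \<in> traffic_tours n q \<sigma>"
proof -
  note s = cyc_shift_apply Suc_mod_add_mod
  have mod_lt: "(i + k) mod n < n" for i
    using n by simp
  have a: "a j \<in> {p j} \<times> {..<2*q}"
    and b: "b j \<in> {p (Suc j mod n)} \<times> {..<2*q} - {a (Suc j mod n)}" if "j < n" for j
    using t that unfolding traffic_tours_def tours_def by auto
  have "cyc_shift n k a \<in> (\<Pi>\<^sub>E i\<in>{..<n}. {cyc_shift n k p i} \<times> {..<2*q})"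
    using a mod_lt by (auto simp: PiE_iff s cyc_shift_extensional)
  moreover have "cyc_shift n k b
      \<in> (\<Pi>\<^sub>E i\<in>{..<n}. {cyc_shift n k p (Suc i mod n)} \<times> {..<2*q} - {cyc_shift n k a (Suc i mod n)})"
  proof (rule PiE_I)
    fix i assume "i \<in> {..<n}"
    then show "cyc_shift n k b i \<in> {cyc_shift n k p (Suc i mod n)} \<times> {..<2*q} - {cyc_shift n k a (Suc i mod n)}"
      using b[OF mod_lt[of i]] by (simp add: s)
  qed (simp add: cyc_shift_def)
  moreover have "obeys_traffic n \<sigma> (rotate_tour n k (p, c, a, b))"
    using t mod_lt unfolding traffic_tours_def obeys_traffic_def rotate_tour_def by (auto simp: s)
  ultimately show ?thesis
    using t cyc_shift_in_bijections[OF n]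
    unfolding traffic_tours_def tours_def rotate_tour_def by auto
qed

lemma tour_edges_rotate_tour:
  "0 < n \<Longrightarrow> tour_edges n (rotate_tour n k t) = tour_edges n t"
  by (cases t) (simp add: tour_edges_def rotate_tour_def image_cyc_shift)

lemma card_traffic_tours_same_edges_ge:
  assumes n: "0 < n" and t: "t \<in> traffic_tours n q \<sigma>"
  shows "n \<le> card {t' \<in> traffic_tours n q \<sigma>. tour_edges n t' = tour_edges n t}"
proof -
  obtain p c a b where t_eq: "t = (p, c, a, b)" by (cases t)
  have "fst (rotate_tour n k t) 0 = p k" if "k < n" for k
    using n that unfolding t_eq rotate_tour_def cyc_shift_def by simp
  then have "inj_on (\<lambda>k. rotate_tour n k t) {..<n}"
    using traffic_toursD(1) t unfolding t_eq inj_on_def by (metis lessThan_iff)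
  moreover have "(\<lambda>k. rotate_tour n k t) ` {..<n} \<subseteq> {t' \<in> traffic_tours n q \<sigma>. tour_edges n t' = tour_edges n t}"
    using t rotate_tour_in_traffic_tours[OF n] tour_edges_rotate_tour[OF n]
    unfolding t_eq by auto
  ultimately have "card {..<n} \<le> card {t' \<in> traffic_tours n q \<sigma>. tour_edges n t' = tour_edges n t}"
    using finite_traffic_tours by (intro card_inj_on_le) auto
  then show ?thesis by simp
qed

lemma card_traffic_tours_same_edges_le:
  assumes n: "0 < n"
  shows "card {t' \<in> traffic_tours n q \<sigma>. tour_edges n t' = H} \<le> 2 * n"
proof (cases "H \<in> tour_edges n ` traffic_tours n q \<sigma>")
  case False
  then have "{t' \<in> traffic_tours n q \<sigma>. tour_edges n t' = H} = {}" by blast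
  then show ?thesis by (metis card.empty le0)
next
  case True
  then obtain p c a b where t: "(p, c, a, b) \<in> traffic_tours n q \<sigma>" and H: "H = tour_edges n (p, c, a, b)"
    by auto
  define F where "F = {t' \<in> traffic_tours n q \<sigma>. tour_edges n t' = H}"
  define first_edge :: "tour \<Rightarrow> nat \<times> nat" where "first_edge = (\<lambda>(p', c', a', b'). a' 0)"
  have "inj_on first_edge F"
  proof (rule inj_onI)
    fix u v assume uv: "u \<in> F" "v \<in> F" "first_edge u = first_edge v"
    obtain p1 c1 a1 b1 p2 c2 a2 b2 where u: "u = (p1, c1, a1, b1)" and v: "v = (p2, c2, a2, b2)"
      by (cases u, cases v)
    have "(p1, c1, a1, b1) = (p2, c2, a2, b2)"
      using uv unfolding F_def first_edge_def u v by (intro traffic_tour_eqI) auto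
    then show "u = v" unfolding u v .
  qed
  moreover have "first_edge ` F \<subseteq> H"
  proof (rule image_subsetI)
    fix u assume "u \<in> F"
    obtain p' c' a' b' where u: "u = (p', c', a', b')" by (cases u)
    have "first_edge u \<in> tour_edges n u"
      using n unfolding u first_edge_def tour_edges_iff by auto
    with \<open>u \<in> F\<close> show "first_edge u \<in> H"
      unfolding F_def by simp
  qed
  moreover have "card H \<le> 2 * n"
  proof -
    have "card H \<le> card (a ` {..<n}) + card (b ` {..<n})"
      unfolding H tour_edges_def by (simp add: card_Un_le)
    also have "\<dots> \<le> n + n"
      by (intro add_mono card_image_le[THEN order_trans]) auto
    finally show ?thesis by simp
  qed
  moreover have "finite H"
    unfolding H tour_edges_def by simp
  ultimately show ?thesis
    using card_inj_on_le[of first_edge F H] unfolding F_def by simp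
qed

lemma Y_bounds:
  assumes "0 < n"
  shows "n * Y n q \<sigma> \<le> card (traffic_tours n q \<sigma>)" and "card (traffic_tours n q \<sigma>) \<le> 2 * n * Y n q \<sigma>"
proof -
  let ?E = "tour_edges n ` traffic_tours n q \<sigma>"
  let ?F = "\<lambda>H. card {t \<in> traffic_tours n q \<sigma>. tour_edges n t = H}"
  have card_eq: "card (traffic_tours n q \<sigma>) = (\<Sum>H\<in>?E. ?F H)"
    using sum.image_gen[of "traffic_tours n q \<sigma>" "\<lambda>_. 1::nat" "tour_edges n"] finite_traffic_tours
    by simp
  have "Y n q \<sigma> = card ?E"
    unfolding Y_def traffic_ham_cycles_eq_tour_edges ..
  moreover have "n \<le> ?F H" "?F H \<le> 2 * n" if "H \<in> ?E" for H
    using that card_traffic_tours_same_edges_ge[OF assms] card_traffic_tours_same_edges_le[OF assms]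
    by auto
  ultimately show "n * Y n q \<sigma> \<le> card (traffic_tours n q \<sigma>)" "card (traffic_tours n q \<sigma>) \<le> 2 * n * Y n q \<sigma>"
    unfolding card_eq using sum_bounded_below[of ?E n ?F] sum_bounded_above[of ?E ?F "2 * n"]
    by (auto simp: mult.commute)
qed

section \<open>Counting configurations and tours\<close>

definition partner :: "nat \<Rightarrow> nat" where
  "partner j = (if even j then Suc j else j - 1)"

lemma designated_pair_iff_partner: "designated_pair j j' \<longleftrightarrow> j' = partner j"
  unfolding designated_pair_def partner_def by presburger

lemma partner_less: "j < 2 * q \<Longrightarrow> partner j < 2 * q"
  unfolding partner_def by presburger

lemma partner_neq: "partner j \<noteq> j"
  unfolding partner_def by presburger

lemma configurations_eq_bijections: "configurations n q = bijections (half_edges n q) (half_edges n q)"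
  unfolding configurations_def bijections_def ..

lemma finite_half_edges: "finite (half_edges n q)"
  unfolding half_edges_def by simp

lemma card_half_edges: "card (half_edges n q) = n * (2 * q)"
  unfolding half_edges_def by (simp add: card_cartesian_product)

lemma card_configurations: "card (configurations n q) = fact (n * (2 * q))"
  by (simp add: configurations_eq_bijections card_bijections finite_half_edges card_half_edges)

(* A configuration realises a tour iff it maps tour_half_edge a b to coloured_end c g, where g i
   is the index of the half-edge at c i reached from p i. *)
definition tour_half_edge :: "(nat \<Rightarrow> nat \<times> nat) \<Rightarrow> (nat \<Rightarrow> nat \<times> nat) \<Rightarrow> nat \<times> bool \<Rightarrow> nat \<times> nat" where
  "tour_half_edge a b = (\<lambda>(i, s). if s then b i else a i)"

definition coloured_end :: "(nat \<Rightarrow> nat) \<Rightarrow> (nat \<Rightarrow> nat) \<Rightarrow> nat \<times> bool \<Rightarrow> nat \<times> nat" where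
  "coloured_end c g = (\<lambda>(i, s). (c i, if s then partner (g i) else g i))"

lemma obeys_traffic_with_colours_iff:
  assumes "g \<in> {..<n} \<rightarrow>\<^sub>E {..<2*q}"
  shows "obeys_traffic n \<sigma> (p, c, a, b) \<and> (\<lambda>i\<in>{..<n}. snd (\<sigma> (a i))) = g
    \<longleftrightarrow> (\<forall>\<kappa>\<in>{..<n} \<times> UNIV. \<sigma> (tour_half_edge a b \<kappa>) = coloured_end c g \<kappa>)"
proof -
  have "(\<lambda>i\<in>{..<n}. snd (\<sigma> (a i))) = g \<longleftrightarrow> (\<forall>i<n. snd (\<sigma> (a i)) = g i)"
  proof
    assume "(\<lambda>i\<in>{..<n}. snd (\<sigma> (a i))) = g"
    then show "\<forall>i<n. snd (\<sigma> (a i)) = g i"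
      by (metis lessThan_iff restrict_apply')
  next
    assume "\<forall>i<n. snd (\<sigma> (a i)) = g i"
    then show "(\<lambda>i\<in>{..<n}. snd (\<sigma> (a i))) = g"
      using assms by (intro extensionalityI[of _ "{..<n}"]) (auto simp: PiE_iff)
  qed
  moreover have "obeys_traffic n \<sigma> (p, c, a, b) \<and> (\<forall>i<n. snd (\<sigma> (a i)) = g i)
      \<longleftrightarrow> (\<forall>i<n. \<sigma> (a i) = (c i, g i) \<and> \<sigma> (b i) = (c i, partner (g i)))"
    unfolding obeys_traffic_def designated_pair_iff_partner by (auto simp: prod_eq_iff)
  moreover have "(\<forall>\<kappa>\<in>{..<n} \<times> UNIV. \<sigma> (tour_half_edge a b \<kappa>) = coloured_end c g \<kappa>)
      \<longleftrightarrow> (\<forall>i<n. \<sigma> (a i) = (c i, g i) \<and> \<sigma> (b i) = (c i, partner (g i)))"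
    unfolding tour_half_edge_def coloured_end_def by auto
  ultimately show ?thesis by blast
qed

lemma tour_half_edge_in_half_edges:
  assumes "(p, c, a, b) \<in> tours n q" "i < n"
  shows "a i \<in> half_edges n q" "b i \<in> half_edges n q"
  using toursD(3)[OF assms] toursD(3)[OF assms(1), of "Suc i mod n"] toursD(5,6)[OF assms] assms(2)
  unfolding half_edges_def by (auto simp: mem_Times_iff)

lemma inj_on_tour_half_edge:
  assumes "(p, c, a, b) \<in> tours n q"
  shows "inj_on (tour_half_edge a b) ({..<n} \<times> UNIV)"
proof (rule inj_onI, clarify)
  fix i s j s' assume "i < n" "j < n" "tour_half_edge a b (i, s) = tour_half_edge a b (j, s')"
  then show "i = j \<and> s = s'"
    using tour_half_edges_distinct[OF assms] unfolding tour_half_edge_def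
    by (cases s; cases s') (auto, metis)
qed

lemma inj_on_coloured_end:
  assumes "inj_on c {..<n}"
  shows "inj_on (coloured_end c g) ({..<n} \<times> UNIV)"
proof (rule inj_onI, clarify)
  fix i s j s' assume "i < n" "j < n" and eq: "coloured_end c g (i, s) = coloured_end c g (j, s')"
  then have "i = j"
    using assms unfolding coloured_end_def by (auto dest: inj_onD)
  with eq show "i = j \<and> s = s'"
    using partner_neq[of "g j"] unfolding coloured_end_def by (cases s; cases s') auto
qed

lemma card_configurations_obeying_traffic:
  assumes t: "(p, c, a, b) \<in> tours n q"
  shows "card {\<sigma> \<in> configurations n q. obeys_traffic n \<sigma> (p, c, a, b)} = (2 * q) ^ n * fact (n * (2 * q) - n * 2)"
proof -
  let ?E = "half_edges n q" and ?K = "{..<n} \<times> (UNIV :: bool set)" and ?G = "{..<n} \<rightarrow>\<^sub>E {..<2*q}"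
  define S where "S = {\<sigma> \<in> configurations n q. obeys_traffic n \<sigma> (p, c, a, b)}"
  define colours where "colours \<sigma> = (\<lambda>i\<in>{..<n}. snd (\<sigma> (a i)))" for \<sigma> :: "nat \<times> nat \<Rightarrow> nat \<times> nat"
  have coloured_end_E: "coloured_end c g ` ?K \<subseteq> ?E" if "g \<in> ?G" for g
    using that toursD(4)[OF t] partner_less unfolding coloured_end_def half_edges_def by (auto simp: PiE_iff)
  have card_fibre: "card {\<sigma> \<in> S. colours \<sigma> = g} = fact (n * (2 * q) - n * 2)" if "g \<in> ?G" for g
  proof -
    have "{\<sigma> \<in> S. colours \<sigma> = g}
        = {\<sigma> \<in> bijections ?E ?E. \<forall>\<kappa>\<in>?K. \<sigma> (tour_half_edge a b \<kappa>) = coloured_end c g \<kappa>}"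
      using obeys_traffic_with_colours_iff[OF that]
      unfolding S_def colours_def configurations_eq_bijections by blast
    also have "card \<dots> = fact (n * (2 * q) - n * 2)"
      using that tour_half_edge_in_half_edges[OF t] inj_on_tour_half_edge[OF t]
        inj_on_coloured_end[OF toursD(2)[OF t]] coloured_end_E[OF that]
      by (subst card_bijections_mapping)
        (auto simp: finite_half_edges card_half_edges card_cartesian_product tour_half_edge_def)
    finally show ?thesis .
  qed
  have "colours ` S \<subseteq> ?G"
  proof (rule image_subsetI)
    fix \<sigma> assume "\<sigma> \<in> S"
    then have "\<sigma> (a i) \<in> ?E" if "i < n" for i
      using tour_half_edge_in_half_edges(1)[OF t that]
      unfolding S_def configurations_eq_bijections by (auto dest: bijectionsD(3))
    then show "colours \<sigma> \<in> ?G"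
      unfolding colours_def half_edges_def by (auto simp: mem_Times_iff)
  qed
  then have "card S = (\<Sum>g\<in>?G. card {\<sigma> \<in> S. colours \<sigma> = g})"
    using sum.group[of S ?G colours "\<lambda>_. 1::nat"] finite_bijections[OF finite_half_edges finite_half_edges]
    unfolding S_def configurations_eq_bijections by (simp add: finite_PiE)
  also have "\<dots> = (2 * q) ^ n * fact (n * (2 * q) - n * 2)"
    using card_fibre by (simp add: card_PiE)
  finally show ?thesis unfolding S_def .
qed

lemma card_tours: "card (tours n q) = fact n * fact n * ((2 * q) ^ n * (2 * q - 1) ^ n)"
proof -
  let ?B = "bijections {..<n} {..<n :: nat}"
  let ?A = "\<lambda>p. \<Pi>\<^sub>E i\<in>{..<n}. {p i} \<times> {..<2*q}"
  let ?C = "\<lambda>p a. \<Pi>\<^sub>E i\<in>{..<n}. {p (Suc i mod n)} \<times> {..<2*q} - {a (Suc i mod n)}"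
  have tours_eq: "tours n q = Sigma ?B (\<lambda>p. ?B \<times> Sigma (?A p) (?C p))"
    unfolding tours_def by auto
  have card_A: "card (?A p) = (2 * q) ^ n" for p :: "nat \<Rightarrow> nat"
    by (simp add: card_PiE card_cartesian_product)
  have card_C: "card (?C p a) = (2 * q - 1) ^ n" if "a \<in> ?A p" for p :: "nat \<Rightarrow> nat" and a
  proof -
    have "a (Suc i mod n) \<in> {p (Suc i mod n)} \<times> {..<2*q}" if "i < n" for i
      using \<open>a \<in> ?A p\<close> that by (auto simp: PiE_iff)
    then show ?thesis
      by (simp add: card_PiE card_Diff_singleton card_cartesian_product)
  qed
  have "card (Sigma (?A p) (?C p)) = (\<Sum>a\<in>?A p. card (?C p a))" for p :: "nat \<Rightarrow> nat"
    by (simp add: finite_PiE)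
  also have "(\<Sum>a\<in>?A p. card (?C p a)) = (\<Sum>a\<in>?A p. (2 * q - 1) ^ n)" for p :: "nat \<Rightarrow> nat"
    by (rule sum.cong[OF refl card_C])
  also have "(\<Sum>a\<in>?A p. (2 * q - 1) ^ n) = (2 * q) ^ n * (2 * q - 1) ^ n" for p :: "nat \<Rightarrow> nat"
    by (simp add: card_A)
  finally have card_Sigma: "card (Sigma (?A p) (?C p)) = (2 * q) ^ n * (2 * q - 1) ^ n"
    for p :: "nat \<Rightarrow> nat" .
  then show ?thesis
    unfolding tours_eq using card_bijections[of "{..<n}" "{..<n}"] card_Sigma
    by (simp add: card_cartesian_product finite_bijections finite_PiE)
qed

lemma sum_card_traffic_tours:
  "(\<Sum>\<sigma>\<in>configurations n q. card (traffic_tours n q \<sigma>))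
     = card (tours n q) * ((2 * q) ^ n * fact (n * (2 * q) - n * 2))"
proof -
  have "(\<Sum>\<sigma>\<in>configurations n q. card (traffic_tours n q \<sigma>))
      = (\<Sum>t\<in>tours n q. card {\<sigma> \<in> configurations n q. obeys_traffic n \<sigma> t})"
    using sum.swap_restrict[of "configurations n q" "tours n q" "\<lambda>_ _. 1::nat" "\<lambda>\<sigma> t. obeys_traffic n \<sigma> t"]
      finite_tours finite_bijections[OF finite_half_edges finite_half_edges]
    unfolding traffic_tours_def configurations_eq_bijections by simp
  also have "\<dots> = (\<Sum>t\<in>tours n q. (2 * q) ^ n * fact (n * (2 * q) - n * 2))"
    by (rule sum.cong) (auto simp: card_configurations_obeying_traffic)
  finally show ?thesis by simp
qed

section \<open>Expectation of \<open>Y\<close>\<close>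

lemma EY_eq_mean_Y: "EY n q = (\<Sum>\<sigma>\<in>configurations n q. real (Y n q \<sigma>)) / fact (n * (2 * q))"
  unfolding EY_def card_configurations by simp

lemma EY_bounds_mean_traffic_tours:
  fixes n q :: nat
  assumes "0 < n"
  defines "T \<equiv> (\<Sum>\<sigma>\<in>configurations n q. real (card (traffic_tours n q \<sigma>))) / fact (n * (2 * q))"
  shows "T / (2 * n) \<le> EY n q" and "EY n q \<le> T / n"
proof -
  let ?C = "configurations n q"
  have F: "(fact (n * (2 * q)) :: real) > 0" by simp
  have "real n * (\<Sum>\<sigma>\<in>?C. real (Y n q \<sigma>)) \<le> (\<Sum>\<sigma>\<in>?C. real (card (traffic_tours n q \<sigma>)))"
    unfolding sum_distrib_left using Y_bounds(1)[OF assms(1)]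
    by (intro sum_mono) (metis of_nat_le_iff of_nat_mult)
  moreover have "(\<Sum>\<sigma>\<in>?C. real (card (traffic_tours n q \<sigma>))) \<le> 2 * real n * (\<Sum>\<sigma>\<in>?C. real (Y n q \<sigma>))"
    unfolding sum_distrib_left using Y_bounds(2)[OF assms(1)]
    by (intro sum_mono) (metis of_nat_le_iff of_nat_mult of_nat_numeral)
  ultimately show "T / (2 * n) \<le> EY n q" "EY n q \<le> T / n"
    using assms(1) F unfolding T_def EY_eq_mean_Y by (simp_all add: field_simps)
qed

lemma mean_traffic_tours_eq:
  "(\<Sum>\<sigma>\<in>configurations n q. real (card (traffic_tours n q \<sigma>))) / fact (n * (2 * q))
     = fact n ^ 2 * (real (2 * q) * real (2 * q - 1) * real (2 * q)) ^ n
       * fact (n * (2 * q) - n * 2) / fact (n * (2 * q))"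
proof -
  have regroup: "(f * f * (x ^ n * y ^ n)) * (x ^ n * g) = f ^ 2 * (x * y * x) ^ n * g" for f g x y :: real
    by (simp add: power_mult_distrib power2_eq_square)
  have "(\<Sum>\<sigma>\<in>configurations n q. real (card (traffic_tours n q \<sigma>)))
      = real (card (tours n q)) * (real (2 * q) ^ n * fact (n * (2 * q) - n * 2))"
    unfolding of_nat_sum[symmetric] sum_card_traffic_tours by simp
  also have "\<dots> = fact n ^ 2 * (real (2 * q) * real (2 * q - 1) * real (2 * q)) ^ n * fact (n * (2 * q) - n * 2)"
    unfolding card_tours of_nat_mult of_nat_power of_nat_fact regroup ..
  finally show ?thesis by simp
qed

lemma mean_traffic_tours_div_n:
  fixes k n :: nat
  assumes "k \<ge> 1" "n \<ge> 1"
  shows "fact n ^ 2 * ((real k + 2) * (real k + 1) * (real k + 2)) ^ n * fact (k * n) / fact ((k + 2) * n) / n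
     = exp (2 * stirling_error n + stirling_error (k * n) - stirling_error ((k + 2) * n))
       * sqrt (real k / (real k + 2)) * ((real k + 1) * real k ^ k / (real k + 2) ^ k) ^ n"
proof -
  have base: "(real k + 2) * (real k + 1) * (real k + 2) * (real k ^ k / (real k + 2) ^ (k + 2))
      = (real k + 1) * real k ^ k / (real k + 2) ^ k"
  proof -
    have cancel: "t * u * t * (K / (Y * (t * t))) = u * K / Y" if "t \<noteq> 0" "Y \<noteq> 0" for t u K Y :: real
      using that by (simp add: field_simps)
    show ?thesis
      unfolding power_add power2_eq_square by (rule cancel) auto
  qed
  have "fact n ^ 2 * ((real k + 2) * (real k + 1) * (real k + 2)) ^ n * fact (k * n) / fact ((k + 2) * n)
      = ((real k + 2) * (real k + 1) * (real k + 2)) ^ n * (fact n ^ 2 * fact (k * n) / fact ((k + 2) * n))"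
    by simp
  also have "\<dots> = exp (2 * stirling_error n + stirling_error (k * n) - stirling_error ((k + 2) * n))
       * real n * sqrt (real k / (real k + 2)) * ((real k + 1) * real k ^ k / (real k + 2) ^ k) ^ n"
    unfolding fact_sq_mult_fact_div_fact[OF assms] base[symmetric] power_mult_distrib by simp
  finally have eq: "fact n ^ 2 * ((real k + 2) * (real k + 1) * (real k + 2)) ^ n * fact (k * n) / fact ((k + 2) * n)
      = exp (2 * stirling_error n + stirling_error (k * n) - stirling_error ((k + 2) * n))
       * real n * sqrt (real k / (real k + 2)) * ((real k + 1) * real k ^ k / (real k + 2) ^ k) ^ n" .
  show ?thesis
    unfolding eq using assms(2) by simp
qed

lemma EY_geometric_bounds:
  fixes q :: nat
  assumes "q \<ge> 2"
  defines "k \<equiv> 2 * q - 2"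
  defines "r \<equiv> (real k + 1) * real k ^ k / (real k + 2) ^ k" and "c \<equiv> sqrt (real k / (real k + 2))"
  assumes "n \<ge> 1"
  shows "exp (1/2) * c / 2 * r ^ n \<le> EY n q" and "EY n q \<le> exp (5/2) * c * r ^ n"
proof -
  have k: "k \<ge> 1" and kq: "2 * q = k + 2" using assms(1) by (simp_all add: k_def)
  define s where "s = 2 * stirling_error n + stirling_error (k * n) - stirling_error ((k + 2) * n)"
  have "1/2 \<le> s" "s \<le> 5/2"
    using stirling_error_bounds[OF \<open>n \<ge> 1\<close>] stirling_error_bounds[of "k * n"]
      stirling_error_bounds[of "(k + 2) * n"] k \<open>n \<ge> 1\<close>
    unfolding s_def by auto
  moreover have "c * r ^ n \<ge> 0"
    unfolding c_def r_def by simp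
  ultimately have "exp (1/2) * (c * r ^ n) \<le> exp s * (c * r ^ n)" "exp s * (c * r ^ n) \<le> exp (5/2) * (c * r ^ n)"
    by (simp_all add: mult_right_mono)
  moreover have "fact n ^ 2 * (real (2 * q) * real (2 * q - 1) * real (2 * q)) ^ n
       * fact (n * (2 * q) - n * 2) / fact (n * (2 * q)) / n = exp s * (c * r ^ n)"
  proof -
    have e: "n * (2 * q) = (k + 2) * n" "(k + 2) * n - n * 2 = k * n"
      "real (2 * q) = real k + 2" "real (2 * q - 1) = real k + 1"
      using kq by (simp_all add: algebra_simps)
    show ?thesis
      unfolding e using mean_traffic_tours_div_n[OF k \<open>n \<ge> 1\<close>]
      unfolding s_def c_def r_def by (simp only: mult.assoc)
  qed
  ultimately show "exp (1/2) * c / 2 * r ^ n \<le> EY n q" "EY n q \<le> exp (5/2) * c * r ^ n"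
    using EY_bounds_mean_traffic_tours[of n q] \<open>n \<ge> 1\<close> unfolding mean_traffic_tours_eq
    by (simp_all add: field_simps)
qed

lemma geometric_growth_rate_gt_1:
  fixes k :: nat
  assumes "k \<ge> 6"
  shows "(real k + 1) * real k ^ k / (real k + 2) ^ k > 1"
proof -
  have k: "real k > 0" using assms by simp
  have "((real k + 2) / real k) ^ k < real k + 1"
  proof (cases "k = 6")
    case True
    then show ?thesis by (simp add: power_divide)
  next
    case False
    have "((real k + 2) / real k) ^ k = (1 + 2 / real k) ^ k"
      using k by (simp add: field_simps)
    also have "\<dots> \<le> exp (2 / real k) ^ k"
      using k by (intro power_mono exp_ge_add_one_self) auto
    also have "\<dots> = exp 1 * exp 1"
      using k by (simp add: exp_of_nat_mult[symmetric] exp_add[symmetric])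
    also have "\<dots> < 2.72 * 2.72"
      using e_less_272 by (intro mult_strict_mono) auto
    also have "\<dots> < real k + 1"
      using assms False by simp
    finally show ?thesis .
  qed
  then show ?thesis
    using k by (simp add: power_divide field_simps)
qed

lemma bigtheta_geometric_sandwich:
  fixes f :: "nat \<Rightarrow> real"
  assumes "0 < c1" "0 < r" and bounds: "\<And>n. n \<ge> 1 \<Longrightarrow> c1 * r ^ n \<le> f n \<and> f n \<le> c2 * r ^ n"
  shows "f \<in> \<Theta>(\<lambda>n. r ^ n)"
proof (rule bigthetaI'[of c1 c2])
  have lower_pos: "0 < c1 * r ^ n" for n
    using assms(1,2) by simp
  have "0 < c2 * r"
    using bounds[of 1] lower_pos[of 1] by simp
  then show "0 < c2"
    using assms(2) by (simp add: zero_less_mult_iff)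
  show "eventually (\<lambda>n. c1 * norm (r ^ n) \<le> norm (f n) \<and> norm (f n) \<le> c2 * norm (r ^ n)) sequentially"
  proof (rule eventually_sequentiallyI[of 1])
    fix n :: nat assume "n \<ge> 1"
    then show "c1 * norm (r ^ n) \<le> norm (f n) \<and> norm (f n) \<le> c2 * norm (r ^ n)"
      using bounds[of n] lower_pos[of n] assms(2) by simp
  qed
qed (rule assms(1))

lemma geometric_sandwich_limits:
  fixes f :: "nat \<Rightarrow> real"
  assumes "0 < c1" "0 < r" and bounds: "\<And>n. n \<ge> 1 \<Longrightarrow> c1 * r ^ n \<le> f n \<and> f n \<le> c2 * r ^ n"
  shows "r < 1 \<Longrightarrow> f \<longlonglongrightarrow> 0" and "r > 1 \<Longrightarrow> filterlim f at_top sequentially"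
proof -
  have lower: "eventually (\<lambda>n. c1 * r ^ n \<le> f n) sequentially"
    and upper: "eventually (\<lambda>n. f n \<le> c2 * r ^ n) sequentially"
    using bounds by (auto intro: eventually_sequentiallyI[of 1])
  have nonneg: "eventually (\<lambda>n. 0 \<le> f n) sequentially"
    using lower by (rule eventually_mono) (use assms(1,2) in \<open>simp add: order_trans[rotated]\<close>)
  show "f \<longlonglongrightarrow> 0" if "r < 1"
  proof (rule tendsto_sandwich[OF nonneg upper tendsto_const])
    show "(\<lambda>n. c2 * r ^ n) \<longlonglongrightarrow> 0"
      using that assms(2) by (intro tendsto_mult_right_zero LIMSEQ_power_zero) simp
  qed
  show "filterlim f at_top sequentially" if "r > 1"
  proof (rule filterlim_at_top_mono[OF _ lower])
    have "filterlim (\<lambda>n. r ^ n) at_top sequentially"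
      using that by (intro filterlim_at_infinity_imp_filterlim_at_top filterlim_realpow_sequentially_gt1) auto
    then show "filterlim (\<lambda>n. c1 * r ^ n) at_top sequentially"
      using assms(1) by (intro filterlim_tendsto_pos_mult_at_top[OF tendsto_const])
  qed
qed

theorem lemma3p2:
  fixes q :: nat and d r :: real
  assumes "q \<ge> 2"
    and "d = real (2 * q)"
    and "r = (d - 1) * (d - 2) ^ (2 * q - 2) / d ^ (2 * q - 2)"
  shows "(\<lambda>n. EY n q) \<in> \<Theta>(\<lambda>n. r ^ n)
         \<and> (q \<le> 3 \<longrightarrow> (\<lambda>n. EY n q) \<longlonglongrightarrow> 0)
         \<and> (q \<ge> 4 \<longrightarrow> filterlim (\<lambda>n. EY n q) at_top sequentially)"
proof -
  define k where "k = 2 * q - 2"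
  define c where "c = sqrt (real k / (real k + 2))"
  have r: "r = (real k + 1) * real k ^ k / (real k + 2) ^ k"
    using assms by (simp add: k_def of_nat_diff)
  have pos: "0 < exp (1/2) * c / 2" "0 < r"
    using assms(1) unfolding r c_def k_def by simp_all
  have bounds: "exp (1/2) * c / 2 * r ^ n \<le> EY n q \<and> EY n q \<le> exp (5/2) * c * r ^ n" if "n \<ge> 1" for n
    using EY_geometric_bounds[OF assms(1) that] unfolding r c_def k_def by blast
  have "r < 1" if "q \<le> 3"
  proof -
    have "k = 2 \<or> k = 4" using that assms(1) unfolding k_def by presburger
    then show ?thesis unfolding r by auto
  qed
  moreover have "r > 1" if "q \<ge> 4"
    unfolding r using that by (intro geometric_growth_rate_gt_1) (simp add: k_def)
  ultimately show ?thesis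
    using bigtheta_geometric_sandwich[OF pos bounds] geometric_sandwich_limits[OF pos bounds]
    by (intro conjI impI) simp_all
qed

end
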